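(* Assume $\phi$ is convex, $R_\phi$ is strictly convex, $\mathbf{w}_{\mathrm{sup}}$ is the minimizer of $R_\phi$, and $\mathbf{w}_{\mathrm{sup}}\in\mathcal{C}_\phi$. Then there exists $\mathbf{q}^\ast\in[0,1]^U$ such that for every $\mathbf{w}_{\mathrm{semi}}\in\mathbb{R}^d$ with $\mathbf{w}_{\mathrm{semi}}\neq\mathbf{w}_{\mathrm{sup}}$ we have $D_\phi(\mathbf{w}_{\mathrm{semi}},\mathbf{q}^\ast)>0$.
   Context: Fix integers $L,U,d\ge 1$. Let $\mathbf{X}\in\mathbb{R}^{L\times d}$ be a matrix whose rows $\mathbf{x}_1^\top,\dots,\mathbf{x}_L^\top$ are the labeled objects, with labels $\mathbf{y}\in\{-1,+1\}^L$. Let $\mathbf{X}_{\mathrm{u}}\in\mathbb{R}^{U\times d}$ be a matrix whose rows $\mathbf{x}_{\mathrm{u},1}^\top,\dots,\mathbf{x}_{\mathrm{u},U}^\top$ are the unlabeled objects. Let $\phi:\mathbb{R}\to\mathbb{R}$ be a loss function, $\Omega:\mathbb{R}^d\to\mathbb{R}$ a convex function and $\lambda\ge 0$. The supervised risk is $R_\phi(\mathbf{w})=\sum_{i=1}^L\phi(y_i\mathbf{x}_i^\top\mathbf{w})+\lambda\Omega(\mathbf{w})$. For responsibilities $\mathbf{q}\in[0,1]^U$ the semi-supervised risk is $R^{\mathrm{semi}}_\phi(\mathbf{w},\mathbf{q})=R_\phi(\mathbf{w})+\sum_{j=1}^U\big[q_j\phi(\mathbf{x}_{\mathrm{u},j}^\top\mathbf{w})+(1-q_j)\phi(-\mathbf{x}_{\mathrm{u},j}^\top\mathbf{w})\big]$.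 Given the minimizer $\mathbf{w}_{\mathrm{sup}}$ of $R_\phi$, define $D_\phi(\mathbf{w},\mathbf{q})=R^{\mathrm{semi}}_\phi(\mathbf{w},\mathbf{q})-R^{\mathrm{semi}}_\phi(\mathbf{w}_{\mathrm{sup}},\mathbf{q})$. The constraint set is $\mathcal{C}_\phi=\{\mathbf{w}\in\mathbb{R}^d:\ \exists\,\mathbf{q}\in[0,1]^U \text{ such that } \mathbf{w} \text{ minimizes } R^{\mathrm{semi}}_\phi(\cdot,\mathbf{q})\}$. *)

theory Defs
  imports "HOL-Analysis.Analysis"
begin

definition strictly_convex_on :: "'a::real_vector set \<Rightarrow> ('a \<Rightarrow> real) \<Rightarrow> bool" where
  "strictly_convex_on S f \<longleftrightarrow>
     (\<forall>x\<in>S. \<forall>y\<in>S. \<forall>t::real. x \<noteq> y \<and> 0 < t \<and> t < 1 \<longrightarrow>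
        f (t *\<^sub>R x + (1 - t) *\<^sub>R y) < t * f x + (1 - t) * f y)"

definition R_sup ::
  "(real \<Rightarrow> real) \<Rightarrow> (real^'d \<Rightarrow> real) \<Rightarrow> real \<Rightarrow> nat \<Rightarrow> (nat \<Rightarrow> real^'d) \<Rightarrow> (nat \<Rightarrow> real)
     \<Rightarrow> real^'d \<Rightarrow> real" where
  "R_sup phi Omega lam L X y w = (\<Sum>i<L. phi (y i * (X i \<bullet> w))) + lam * Omega w"

definition R_semi ::
  "(real \<Rightarrow> real) \<Rightarrow> (real^'d \<Rightarrow> real) \<Rightarrow> real \<Rightarrow> nat \<Rightarrow> (nat \<Rightarrow> real^'d) \<Rightarrow> (nat \<Rightarrow> real)
     \<Rightarrow> nat \<Rightarrow> (nat \<Rightarrow> real^'d) \<Rightarrow> real^'d \<Rightarrow> (nat \<Rightarrow> real) \<Rightarrow> real" where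
  "R_semi phi Omega lam L X y U Xu w q =
     R_sup phi Omega lam L X y w
     + (\<Sum>j<U. q j * phi (Xu j \<bullet> w) + (1 - q j) * phi (- (Xu j \<bullet> w)))"

definition resp :: "nat \<Rightarrow> (nat \<Rightarrow> real) set" where
  "resp U = {q. \<forall>j<U. 0 \<le> q j \<and> q j \<le> 1}"

definition C_set ::
  "(real \<Rightarrow> real) \<Rightarrow> (real^'d \<Rightarrow> real) \<Rightarrow> real \<Rightarrow> nat \<Rightarrow> (nat \<Rightarrow> real^'d) \<Rightarrow> (nat \<Rightarrow> real)
     \<Rightarrow> nat \<Rightarrow> (nat \<Rightarrow> real^'d) \<Rightarrow> (real^'d) set" where
  "C_set phi Omega lam L X y U Xu =
     {w. \<exists>q\<in>resp U. \<forall>v. R_semi phi Omega lam L X y U Xu w q \<le> R_semi phi Omega lam L X y U Xu v q}"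

definition D_phi ::
  "(real \<Rightarrow> real) \<Rightarrow> (real^'d \<Rightarrow> real) \<Rightarrow> real \<Rightarrow> nat \<Rightarrow> (nat \<Rightarrow> real^'d) \<Rightarrow> (nat \<Rightarrow> real)
     \<Rightarrow> nat \<Rightarrow> (nat \<Rightarrow> real^'d) \<Rightarrow> real^'d \<Rightarrow> real^'d \<Rightarrow> (nat \<Rightarrow> real) \<Rightarrow> real" where
  "D_phi phi Omega lam L X y U Xu wsup w q =
     R_semi phi Omega lam L X y U Xu w q - R_semi phi Omega lam L X y U Xu wsup q"

end

theory Submission
  imports Defs
begin

text \<open>For the responsibilities q that certify w_sup \<in> C_phi, the semi-supervised risk is the
strictly convex supervised risk plus a convex term (a nonnegative combination of phi composed
with linear forms), hence strictly convex. A minimizer of a strictly convex function is a strict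
minimizer: if w \<noteq> w_sup, the midpoint of w and w_sup has risk at least that of w_sup but strictly
less than the average of the two risks, so the risk of w exceeds that of w_sup.\<close>

lemma convex_on_compose_linear:
  assumes "convex_on UNIV f" and "linear g"
  shows "convex_on UNIV (\<lambda>x. f (g x))"
proof (rule convex_onI)
  fix t :: real and x y assume "0 < t" "t < 1"
  then show "f (g ((1 - t) *\<^sub>R x + t *\<^sub>R y)) \<le> (1 - t) * f (g x) + t * f (g y)"
    using convex_onD[OF assms(1), of t "g x" "g y"]
    by (simp add: linear_add[OF assms(2)] linear_scale[OF assms(2)])
qed simp

lemma convex_on_sum_fun:
  assumes "finite I" and "convex S" and "\<And>i. i \<in> I \<Longrightarrow> convex_on S (f i)"
  shows "convex_on S (\<lambda>x. \<Sum>i\<in>I. f i x)"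
  using assms(1,3)
proof (induction I rule: finite_induct)
  case empty
  then show ?case using assms(2) by (simp add: convex_on_const)
next
  case (insert i I)
  then show ?case by (simp add: convex_on_add)
qed

lemma strictly_convex_on_add_convex:
  assumes "strictly_convex_on S f" and "convex_on S g"
  shows "strictly_convex_on S (\<lambda>x. f x + g x)"
  unfolding strictly_convex_on_def
proof (intro ballI allI impI)
  fix x y and t :: real assume xy: "x \<in> S" "y \<in> S" and "x \<noteq> y \<and> 0 < t \<and> t < 1"
  then have "f (t *\<^sub>R x + (1 - t) *\<^sub>R y) < t * f x + (1 - t) * f y"
    using assms(1) unfolding strictly_convex_on_def by blast
  moreover have "g (t *\<^sub>R x + (1 - t) *\<^sub>R y) \<le> t * g x + (1 - t) * g y"
    using convex_onD[OF assms(2), of "1 - t" x y] xy \<open>x \<noteq> y \<and> 0 < t \<and> t < 1\<close> by simp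
  ultimately show "f (t *\<^sub>R x + (1 - t) *\<^sub>R y) + g (t *\<^sub>R x + (1 - t) *\<^sub>R y)
      < t * (f x + g x) + (1 - t) * (f y + g y)"
    by (simp add: algebra_simps)
qed

lemma strictly_convex_on_minimizer_strict:
  assumes "strictly_convex_on S f" and "convex S" and "x \<in> S" "y \<in> S" "x \<noteq> y"
    and min: "\<And>z. z \<in> S \<Longrightarrow> f x \<le> f z"
  shows "f x < f y"
proof -
  let ?m = "(1/2) *\<^sub>R y + (1 - 1/2) *\<^sub>R x"
  have "?m \<in> S"
    using convexD[OF assms(2,4,3)] by simp
  then have "f x \<le> f ?m" by (rule min)
  also have "f ?m < (1/2) * f y + (1 - 1/2) * f x"
    using assms(1,3-5) unfolding strictly_convex_on_def
    by (metis field_sum_of_halves half_gt_zero_iff less_add_same_cancel1 zero_less_one)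
  finally show ?thesis by simp
qed

lemma convex_on_unlabeled_loss:
  fixes phi :: "real \<Rightarrow> real" and Xu :: "nat \<Rightarrow> real^'d"
  assumes "convex_on UNIV phi" and "q \<in> resp U"
  shows "convex_on UNIV (\<lambda>w. \<Sum>j<U. q j * phi (Xu j \<bullet> w) + (1 - q j) * phi (- (Xu j \<bullet> w)))"
proof (rule convex_on_sum_fun)
  fix j assume "j \<in> {..<U}"
  then have "0 \<le> q j" "0 \<le> 1 - q j"
    using assms(2) by (auto simp: resp_def)
  moreover have "linear (\<lambda>w. Xu j \<bullet> w)" "linear (\<lambda>w. - (Xu j \<bullet> w))"
    by (auto intro: linearI simp: inner_add_right)
  then have "convex_on UNIV (\<lambda>w. phi (Xu j \<bullet> w))" "convex_on UNIV (\<lambda>w. phi (- (Xu j \<bullet> w)))"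
    using assms(1) convex_on_compose_linear by blast+
  ultimately show "convex_on UNIV (\<lambda>w. q j * phi (Xu j \<bullet> w) + (1 - q j) * phi (- (Xu j \<bullet> w)))"
    by (intro convex_on_add convex_on_cmul)
qed auto

theorem lemma1:
  fixes phi :: "real \<Rightarrow> real" and Omega :: "real^'d \<Rightarrow> real" and lam :: real
    and L U :: nat and X Xu :: "nat \<Rightarrow> real^'d" and y :: "nat \<Rightarrow> real"
    and wsup :: "real^'d"
  assumes "L \<ge> 1" and "U \<ge> 1"
    and "\<forall>i<L. y i = -1 \<or> y i = 1"
    and "convex_on UNIV Omega" and "lam \<ge> 0"
    and "convex_on UNIV phi"
    and "strictly_convex_on UNIV (R_sup phi Omega lam L X y)"
    and "\<forall>w. R_sup phi Omega lam L X y wsup \<le> R_sup phi Omega lam L X y w"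
    and "wsup \<in> C_set phi Omega lam L X y U Xu"
  shows "\<exists>q\<in>resp U. \<forall>wsemi. wsemi \<noteq> wsup \<longrightarrow> D_phi phi Omega lam L X y U Xu wsup wsemi q > 0"
proof -
  from assms(9) obtain q where q: "q \<in> resp U"
    and min: "\<And>v. R_semi phi Omega lam L X y U Xu wsup q \<le> R_semi phi Omega lam L X y U Xu v q"
    unfolding C_set_def by blast
  have "strictly_convex_on UNIV (\<lambda>w. R_semi phi Omega lam L X y U Xu w q)"
    unfolding R_semi_def
    using strictly_convex_on_add_convex[OF assms(7) convex_on_unlabeled_loss[OF assms(6) q]] .
  then have "R_semi phi Omega lam L X y U Xu wsup q < R_semi phi Omega lam L X y U Xu w q"
    if "w \<noteq> wsup" for w
    using that min by (intro strictly_convex_on_minimizer_strict) auto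
  then show ?thesis
    using q unfolding D_phi_def by auto
qed

end
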